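(* Consider $\bm{y}=\bm{A}\bm{x}+\bm{w}$ over $\mathbb{H}\in\{\mathbb{R},\mathbb{C}\}$, with $\bm A$ having i.i.d. entries $\mathcal{N}(0,1/m)$ (resp. $\mathcal{CN}(0,1/m)$), Gaussian noise of variance $\sigma_w^2=\delta\sigma_0^2$ ($\delta=m/n$, $\sigma_0^2>0$ constant), and signal entries i.i.d. Bernoulli-Gaussian, $p_x=(1-\epsilon)\Delta_{x=0}+\epsilon\,p_G(x;0,\sigma_x^2)$ (resp. $(1-\epsilon)\Delta_{|x|=0}+\epsilon\,p_{CG}(x;0,\sigma_x^2)$), $\epsilon\in(0,1]$, recovered by AMP with the MMSE (posterior mean) denoiser. Let $\delta^\dagger$ be the MSE-optimal measurement ratio as characterized in the context. Then $\delta^{\dagger}<2$. Moreover, if $$\sigma_x^2<\frac{\sigma_0^2}{\epsilon\left(1-R^\infty I(R^\infty,\epsilon)\right)}\ \text{(real case)},\qquad \sigma_x^2<\frac{\sigma_0^2}{\epsilon\left(1-R^\infty I_C(R^\infty,\epsilon)\right)}\ \text{(complex case)},$$ then $\delta^{\dagger}<1$.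
   Context: $p_G(x;0,s^2)$ is the real Gaussian density, $p_{CG}(x;0,s^2)=\frac{1}{\pi s^2}\exp(-|x|^2/s^2)$ the circular complex Gaussian density. For $\sigma_e>0$ let $R=\frac{\sigma_x^2}{\sigma_e^2+\sigma_x^2}$, $$I(R,\epsilon)=\int_{\mathbb{R}}\frac{\phi(x)\,x^2}{1+\frac{1-\epsilon}{\epsilon}\frac{1}{\sqrt{1-R}}\exp\!\left(-\frac{R}{1-R}\frac{x^2}{2}\right)}dx,\quad I_C(R,\epsilon)=\int_{\mathbb{C}}\frac{\phi_C(x)\,|x|^2}{1+\frac{1-\epsilon}{\epsilon}\frac{1}{1-R}\exp\!\left(-\frac{R}{1-R}|x|^2\right)}dx,$$ with $\phi$ the standard real normal density and $\phi_C=p_{CG}(\cdot;0,1)$. The state-evolution MSE of the MMSE denoiser at effective noise level $\sigma_e$ is $\mathrm{Err}(\sigma_e)=\epsilon\sigma_x^2(1-RI(R,\epsilon))$ (real) or $\epsilon\sigma_x^2(1-RI_C(R,\epsilon))$ (complex), and the state evolution is $(\sigma_e^{t+1})^2=\frac1\delta\mathrm{Err}(\sigma_e^t)+\delta\sigma_0^2$; assuming AMP converges, its fixed point $\sigma_e^\infty$ satisfies $(\sigma_e^\infty)^2=\frac1\delta\mathrm{Err}_\infty+\delta\sigma_0^2$ with $\mathrm{Err}_\infty=\mathrm{Err}(\sigma_e^\infty)$. The minimal achievable $\mathrm{Err}_\infty$ over $\delta$ is attained when $(\sigma_e^\infty)^4=4\sigma_0^2\mathrm{Err}_\infty$, and the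 optimal ratio is then $\delta^\dagger=\frac{(\sigma_e^\infty)^2}{2\sigma_0^2}$, with $\sigma_e^\infty$ the solution of this condition and $R^\infty=\frac{\sigma_x^2}{(\sigma_e^\infty)^2+\sigma_x^2}$. *)

theory Defs
  imports "HOL-Probability.Probability"
begin

definition p_CG :: "complex \<Rightarrow> real \<Rightarrow> real" where
  "p_CG x s2 = exp (- (cmod x)\<^sup>2 / s2) / (pi * s2)"

definition R_ratio :: "real \<Rightarrow> real \<Rightarrow> real" where
  "R_ratio sx2 se = sx2 / (se\<^sup>2 + sx2)"

definition I_real :: "real \<Rightarrow> real \<Rightarrow> real" where
  "I_real R eps = (LINT x|lborel. std_normal_density x * x\<^sup>2 /
      (1 + (1 - eps) / eps * (1 / sqrt (1 - R)) * exp (- (R / (1 - R)) * (x\<^sup>2 / 2))))"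

definition I_cplx :: "real \<Rightarrow> real \<Rightarrow> real" where
  "I_cplx R eps = (LINT x|(lborel :: complex measure). p_CG x 1 * (cmod x)\<^sup>2 /
      (1 + (1 - eps) / eps * (1 / (1 - R)) * exp (- (R / (1 - R)) * (cmod x)\<^sup>2)))"

text \<open>State-evolution MSE of the MMSE denoiser at effective noise level se
  (sx2 = sigma_x^2).\<close>
definition Err_real :: "real \<Rightarrow> real \<Rightarrow> real \<Rightarrow> real" where
  "Err_real sx2 eps se = eps * sx2 * (1 - R_ratio sx2 se * I_real (R_ratio sx2 se) eps)"

definition Err_cplx :: "real \<Rightarrow> real \<Rightarrow> real \<Rightarrow> real" where
  "Err_cplx sx2 eps se = eps * sx2 * (1 - R_ratio sx2 se * I_cplx (R_ratio sx2 se) eps)"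

definition delta_opt :: "real \<Rightarrow> real \<Rightarrow> real" where
  "delta_opt s02 se = se\<^sup>2 / (2 * s02)"

end

theory Submission
  imports Defs
begin

(* Since 1 / (1 + t) \<ge> 1 - t for t \<ge> 0, both I and I_C are at least 1 - c m, where c is the
   prefactor of the exponential and m the Gaussian second moment against that exponential; in the
   real and in the complex case c m = (1 - eps) / eps * (1 - R). Together with
   sigma_x^2 (1 - R) = R sigma_e^2 this yields
   Err \<le> sigma_x^2 (1 - R) (eps + R (1 - eps)) \<le> R sigma_e^2 < sigma_e^2.
   The optimality condition sigma_e^4 = 4 sigma_0^2 Err then forces sigma_e^2 < 4 sigma_0^2, i.e.
   delta < 2; the extra hypothesis says exactly Err < sigma_0^2, so sigma_e^4 < 4 sigma_0^4 and
   delta < 1. *)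

lemma integral_divide_one_plus_ge:
  fixes g E :: "'a \<Rightarrow> real"
  assumes [measurable]: "g \<in> borel_measurable M" "E \<in> borel_measurable M"
    and g_nonneg: "\<And>x. 0 \<le> g x" and E_nonneg: "\<And>x. 0 \<le> E x" and "c \<ge> 0"
    and g: "has_bochner_integral M g a" and gE: "has_bochner_integral M (\<lambda>x. g x * E x) m"
  shows "a - c * m \<le> (\<integral>x. g x / (1 + c * E x) \<partial>M)"
proof -
  have denom_ge_1: "1 \<le> 1 + c * E x" for x
    using \<open>c \<ge> 0\<close> E_nonneg[of x] by simp
  have below: "g x - c * (g x * E x) \<le> g x / (1 + c * E x)" for x
  proof -
    have "(g x - c * (g x * E x)) * (1 + c * E x) = g x - g x * (c * E x)\<^sup>2"
      by (simp add: algebra_simps power2_eq_square)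
    also have "\<dots> \<le> g x" using g_nonneg[of x] by simp
    finally show ?thesis using denom_ge_1[of x] by (simp add: le_divide_eq)
  qed
  have integrable: "integrable M (\<lambda>x. g x / (1 + c * E x))"
  proof (rule Bochner_Integration.integrable_bound)
    show "integrable M g" using g by (simp add: has_bochner_integral_iff)
    show "(\<lambda>x. g x / (1 + c * E x)) \<in> borel_measurable M" by measurable
    show "AE x in M. norm (g x / (1 + c * E x)) \<le> norm (g x)"
    proof (rule AE_I2)
      fix x
      have "g x * 1 \<le> g x * (1 + c * E x)" by (rule mult_left_mono[OF denom_ge_1 g_nonneg])
      then have "g x / (1 + c * E x) \<le> g x" using denom_ge_1[of x] by (simp add: divide_le_eq)
      then show "norm (g x / (1 + c * E x)) \<le> norm (g x)" using denom_ge_1[of x] g_nonneg[of x] by simp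
    qed
  qed
  have "has_bochner_integral M (\<lambda>x. g x - c * (g x * E x)) (a - c * m)"
    using g gE by (intro has_bochner_integral_diff has_bochner_integral_mult_right)
  then show ?thesis
    using integral_mono[OF _ integrable below] by (simp add: has_bochner_integral_iff)
qed

lemma (in pair_sigma_finite) integral_mult_fst_snd:
  fixes f g :: "_ \<Rightarrow> real"
  assumes f: "integrable M1 f" and g: "integrable M2 g"
  shows "integrable (M1 \<Otimes>\<^sub>M M2) (\<lambda>p. f (fst p) * g (snd p))"
    and "(\<integral>p. f (fst p) * g (snd p) \<partial>(M1 \<Otimes>\<^sub>M M2)) = integral\<^sup>L M1 f * integral\<^sup>L M2 g"
proof -
  have [measurable]: "f \<in> borel_measurable M1" "g \<in> borel_measurable M2"
    using f g by (auto dest: borel_measurable_integrable)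
  show int: "integrable (M1 \<Otimes>\<^sub>M M2) (\<lambda>p. f (fst p) * g (snd p))"
  proof (rule Fubini_integrable)
    have "integrable M1 (\<lambda>x. norm (f x) * (\<integral>y. norm (g y) \<partial>M2))"
      using f by (intro integrable_mult_left integrable_norm)
    then show "integrable M1 (\<lambda>x. \<integral>y. norm (f (fst (x, y)) * g (snd (x, y))) \<partial>M2)"
      by (simp add: abs_mult)
    show "AE x in M1. integrable M2 (\<lambda>y. f (fst (x, y)) * g (snd (x, y)))"
      using g by simp
  qed measurable
  show "(\<integral>p. f (fst p) * g (snd p) \<partial>(M1 \<Otimes>\<^sub>M M2)) = integral\<^sup>L M1 f * integral\<^sup>L M2 g"
    using integral_fst'[OF int] by simp
qed

lemma measurable_Complex_pair [measurable]:
  "(\<lambda>p::real \<times> real. Complex (fst p) (snd p)) \<in> borel_measurable borel"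
proof -
  have "(\<lambda>p::real \<times> real. complex_of_real (fst p) + \<i> * complex_of_real (snd p))
      \<in> borel_measurable borel"
    by (intro borel_measurable_continuous_onI continuous_intros)
  then show ?thesis by (simp add: Complex_eq)
qed

lemma distr_lborel_Complex:
  "distr (lborel :: (real \<times> real) measure) borel (\<lambda>p. Complex (fst p) (snd p)) = lborel"
proof (rule lborel_eqI[symmetric])
  fix l u :: complex
  assume "\<And>b. b \<in> Basis \<Longrightarrow> l \<bullet> b \<le> u \<bullet> b"
  from this[of 1] this[of \<i>] have le: "Re l \<le> Re u" "Im l \<le> Im u"
    by (auto simp: Basis_complex_def)
  have "(\<lambda>p. Complex (fst p) (snd p)) -` box l u = box (Re l) (Re u) \<times> box (Im l) (Im u)"
    by (auto simp: box_def Basis_complex_def)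
  then have "emeasure (distr lborel borel (\<lambda>p. Complex (fst p) (snd p))) (box l u)
      = emeasure (lborel \<Otimes>\<^sub>M lborel) (box (Re l) (Re u) \<times> box (Im l) (Im u))"
    by (subst emeasure_distr) (auto simp: lborel_prod)
  also have "\<dots> = ennreal (\<Prod>b\<in>Basis. (u - l) \<bullet> b)"
    using le by (simp add: lborel.emeasure_pair_measure_Times ennreal_mult Basis_complex_def)
  finally show "emeasure (distr lborel borel (\<lambda>p. Complex (fst p) (snd p))) (box l u)
      = ennreal (\<Prod>b\<in>Basis. (u - l) \<bullet> b)" .
qed simp

lemma
  fixes f :: "complex \<Rightarrow> real"
  assumes [measurable]: "f \<in> borel_measurable borel"
  shows integral_lborel_complex_pair:
      "integral\<^sup>L lborel f = (\<integral>p. f (Complex (fst p) (snd p)) \<partial>(lborel \<Otimes>\<^sub>M lborel))"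
    and integrable_lborel_complex_pair_iff:
      "integrable lborel f \<longleftrightarrow> integrable (lborel \<Otimes>\<^sub>M lborel) (\<lambda>p. f (Complex (fst p) (snd p)))"
  by (subst distr_lborel_Complex[symmetric],
      simp add: integral_distr integrable_distr_eq lborel_prod)+

lemma std_normal_moment2_gaussian_weight:
  fixes s :: real
  assumes "s > 0"
  shows "has_bochner_integral lborel
     (\<lambda>x. std_normal_density x * x\<^sup>2 * exp (- (1 / s\<^sup>2 - 1) * (x\<^sup>2 / 2))) (s ^ 3)"
proof -
  have integrand: "std_normal_density x * x\<^sup>2 * exp (- (1 / s\<^sup>2 - 1) * (x\<^sup>2 / 2))
      = s * (normal_density 0 s x * (x - 0) ^ (2 * 1))" for x
  proof -
    have "exp (- x\<^sup>2 / 2) * exp (- (1 / s\<^sup>2 - 1) * (x\<^sup>2 / 2)) = exp (- x\<^sup>2 / (2 * s\<^sup>2))"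
      unfolding exp_add[symmetric] using assms by (simp add: field_simps)
    moreover have "sqrt (2 * pi * s\<^sup>2) = s * sqrt (2 * pi)"
      using assms by (simp add: real_sqrt_mult)
    ultimately show ?thesis
      using assms unfolding normal_density_def by (simp add: field_simps power2_eq_square)
  qed
  have "has_bochner_integral lborel (\<lambda>x. s * (normal_density 0 s x * (x - 0) ^ (2 * 1)))
      (s * (fact (2 * 1) / ((2 / s\<^sup>2) ^ 1 * fact 1)))"
    using assms by (intro has_bochner_integral_mult_right normal_moment_even)
  moreover have "s * (fact (2 * 1) / ((2 / s\<^sup>2) ^ 1 * fact 1)) = s ^ 3"
    using assms by (simp add: power2_eq_square power3_eq_cube)
  ultimately show ?thesis unfolding integrand by simp
qed

lemma p_CG_moment2_weight_Complex:
  fixes q a b :: real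
  assumes "q > 0"
  defines "N \<equiv> normal_density 0 (sqrt (q / 2))"
  shows "p_CG (Complex a b) 1 * (cmod (Complex a b))\<^sup>2 * exp (- (1 / q - 1) * (cmod (Complex a b))\<^sup>2)
    = q * ((N a * a\<^sup>2) * N b) + q * (N a * (N b * b\<^sup>2))"
proof -
  have N: "N x = exp (- x\<^sup>2 / q) / sqrt (pi * q)" for x
    unfolding N_def normal_density_def using assms by (simp add: field_simps)
  have "exp (- (a\<^sup>2 + b\<^sup>2)) * exp (- (1 / q - 1) * (a\<^sup>2 + b\<^sup>2)) = exp (- a\<^sup>2 / q) * exp (- b\<^sup>2 / q)"
    unfolding exp_add[symmetric] using assms by (simp add: field_simps)
  moreover have "sqrt (pi * q) * sqrt (pi * q) = pi * q" using assms by simp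
  ultimately show ?thesis
    using assms unfolding p_CG_def N by (simp add: complex_norm field_simps)
qed

lemma p_CG_moment2_gaussian_weight:
  fixes q :: real
  assumes "q > 0"
  shows "has_bochner_integral lborel
     (\<lambda>x. p_CG x 1 * (cmod x)\<^sup>2 * exp (- (1 / q - 1) * (cmod x)\<^sup>2)) (q\<^sup>2)"
proof -
  define h where "h x = p_CG x 1 * (cmod x)\<^sup>2 * exp (- (1 / q - 1) * (cmod x)\<^sup>2)" for x
  define \<sigma> where "\<sigma> = sqrt (q / 2)"
  have \<sigma>: "\<sigma> > 0" "\<sigma>\<^sup>2 = q / 2" using assms by (auto simp: \<sigma>_def)
  define N where "N = normal_density 0 \<sigma>"
  have N0: "integrable lborel N" "integral\<^sup>L lborel N = 1"
    using \<sigma> unfolding N_def by (auto intro: integrable_normal_density integral_normal_density)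
  have "has_bochner_integral lborel (\<lambda>x. N x * x\<^sup>2) (\<sigma>\<^sup>2)"
    using normal_moment_even[OF \<sigma>(1), of 0 1] unfolding N_def by (simp add: power2_eq_square)
  then have N2: "integrable lborel (\<lambda>x. N x * x\<^sup>2)"
      "integral\<^sup>L lborel (\<lambda>x. N x * x\<^sup>2) = \<sigma>\<^sup>2"
    by (auto simp: has_bochner_integral_iff)
  note P1 = lborel_pair.integral_mult_fst_snd[OF N2(1) N0(1)]
  note P2 = lborel_pair.integral_mult_fst_snd[OF N0(1) N2(1)]
  have h_pair: "(\<lambda>p. h (Complex (fst p) (snd p))) = (\<lambda>p. q * ((N (fst p) * (fst p)\<^sup>2) * N (snd p))
      + q * (N (fst p) * (N (snd p) * (snd p)\<^sup>2)))"
    using p_CG_moment2_weight_Complex[OF assms] unfolding h_def N_def \<sigma>_def by simp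
  have h_meas [measurable]: "h \<in> borel_measurable borel" unfolding h_def p_CG_def by measurable
  have "integrable (lborel \<Otimes>\<^sub>M lborel) (\<lambda>p. h (Complex (fst p) (snd p)))"
    unfolding h_pair
    by (intro Bochner_Integration.integrable_add Bochner_Integration.integrable_mult_right P1(1) P2(1))
  then have "integrable lborel h" by (simp add: integrable_lborel_complex_pair_iff)
  moreover have "integral\<^sup>L lborel h = q\<^sup>2"
    unfolding integral_lborel_complex_pair[OF h_meas] h_pair using P1 P2 N0 N2 \<sigma>
    by (simp add: power2_eq_square)
  ultimately show ?thesis unfolding h_def by (simp add: has_bochner_integral_iff)
qed

lemma I_real_ge:
  assumes "0 < R" "R < 1" "0 < eps" "eps \<le> 1"
  shows "1 - (1 - eps) / eps * (1 - R) \<le> I_real R eps"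
proof -
  define s where "s = sqrt (1 - R)"
  have s: "s > 0" "s\<^sup>2 = 1 - R" using assms by (auto simp: s_def)
  have "R / (1 - R) = 1 / s\<^sup>2 - 1" using s assms by (simp add: field_simps)
  then have weighted: "has_bochner_integral lborel
      (\<lambda>x. std_normal_density x * x\<^sup>2 * exp (- (R / (1 - R)) * (x\<^sup>2 / 2))) (s ^ 3)"
    using std_normal_moment2_gaussian_weight[OF s(1)] by simp
  have "has_bochner_integral lborel (\<lambda>x. std_normal_density x * x\<^sup>2) 1"
    using std_normal_moment_even[of 1] by (simp add: power2_eq_square)
  moreover have "0 \<le> (1 - eps) / eps * (1 / sqrt (1 - R))" using assms by simp
  ultimately have "1 - (1 - eps) / eps * (1 / sqrt (1 - R)) * s ^ 3 \<le> I_real R eps"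
    unfolding I_real_def
    by (intro integral_divide_one_plus_ge[OF _ _ _ _ _ _ weighted]) (auto simp: normal_density_def)
  then have "1 - (1 - eps) / eps * (1 / s) * s ^ 3 \<le> I_real R eps" by (simp add: s_def)
  moreover have "(1 - eps) / eps * (1 / s) * s ^ 3 = (1 - eps) / eps * (1 - R)"
    using s by (simp add: power3_eq_cube power2_eq_square)
  ultimately show ?thesis by simp
qed

lemma I_cplx_ge:
  assumes "0 < R" "R < 1" "0 < eps" "eps \<le> 1"
  shows "1 - (1 - eps) / eps * (1 - R) \<le> I_cplx R eps"
proof -
  have "R / (1 - R) = 1 / (1 - R) - 1" using assms by (simp add: field_simps)
  then have weighted: "has_bochner_integral lborel
      (\<lambda>x. p_CG x 1 * (cmod x)\<^sup>2 * exp (- (R / (1 - R)) * (cmod x)\<^sup>2)) ((1 - R)\<^sup>2)"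
    using p_CG_moment2_gaussian_weight[of "1 - R"] assms by simp
  have "has_bochner_integral lborel (\<lambda>x. p_CG x 1 * (cmod x)\<^sup>2) 1"
    using p_CG_moment2_gaussian_weight[of 1] by simp
  moreover have "0 \<le> (1 - eps) / eps * (1 / (1 - R))" using assms by simp
  ultimately have "1 - (1 - eps) / eps * (1 / (1 - R)) * (1 - R)\<^sup>2 \<le> I_cplx R eps"
    unfolding I_cplx_def
    by (intro integral_divide_one_plus_ge[OF _ _ _ _ _ _ weighted]) (auto simp: p_CG_def)
  then show ?thesis using assms by (simp add: power2_eq_square)
qed

lemma R_ratio_bounds:
  assumes "sx2 > 0" "se > 0"
  shows "0 < R_ratio sx2 se" "R_ratio sx2 se < 1"
  using assms by (simp_all add: R_ratio_def add_pos_pos)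

lemma Err_less_noise:
  assumes "sx2 > 0" "se > 0" "0 < eps" "eps \<le> 1"
    and I: "1 - (1 - eps) / eps * (1 - R_ratio sx2 se) \<le> I"
  shows "eps * sx2 * (1 - R_ratio sx2 se * I) < se\<^sup>2"
proof -
  define R where "R = R_ratio sx2 se"
  have R: "0 < R" "R < 1" using R_ratio_bounds[OF assms(1,2)] by (simp_all add: R_def)
  have se2: "se\<^sup>2 > 0" using assms(2) by simp
  then have "se\<^sup>2 + sx2 \<noteq> 0" using assms(1) by linarith
  then have one_minus_R: "sx2 * (1 - R) = R * se\<^sup>2"
    unfolding R_def R_ratio_def by (simp add: field_simps)
  have "eps * sx2 * (1 - R * I) \<le> eps * sx2 * (1 - R * (1 - (1 - eps) / eps * (1 - R)))"
    using assms R I[folded R_def] by (intro mult_left_mono) auto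
  also have "\<dots> = sx2 * (1 - R) * (eps + R * (1 - eps))"
    using \<open>0 < eps\<close> by (simp add: field_simps)
  also have "\<dots> = R * se\<^sup>2 * (eps + R * (1 - eps))"
    by (simp add: one_minus_R)
  also have "\<dots> \<le> R * se\<^sup>2 * 1"
  proof -
    have "R * (1 - eps) \<le> 1 * (1 - eps)" using R assms(4) by (intro mult_right_mono) auto
    then show ?thesis using R by (intro mult_left_mono) auto
  qed
  also have "\<dots> < se\<^sup>2" using R(2) se2 by simp
  finally show ?thesis unfolding R_def .
qed

lemma delta_opt_bounds:
  assumes "se > 0" "s02 > 0"
    and optimal: "se ^ 4 = 4 * s02 * Err" and Err_less: "Err < se\<^sup>2"
  shows "delta_opt s02 se < 2" and "Err < s02 \<Longrightarrow> delta_opt s02 se < 1"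
proof -
  define u where "u = se\<^sup>2"
  have u: "u > 0" "u * u = 4 * s02 * Err"
    using assms(1) optimal unfolding u_def by (simp_all flip: power_add)
  then have "u * u < 4 * s02 * u" using Err_less assms(2) by (simp add: u_def)
  then have "u < 4 * s02" using u(1) by simp
  then show "delta_opt s02 se < 2"
    using assms(2) unfolding delta_opt_def u_def by (simp add: divide_less_eq)
  assume "Err < s02"
  then have "u\<^sup>2 < (2 * s02)\<^sup>2" using u(2) assms(2) by (simp add: power2_eq_square)
  then have "u < 2 * s02" by (rule power_less_imp_less_base) (use assms(2) in simp)
  then show "delta_opt s02 se < 1"
    using assms(2) unfolding delta_opt_def u_def by (simp add: divide_less_eq)
qed

lemma mult_less_if_less_divide:
  fixes x a b :: real
  assumes "0 < x" "0 < a" "x < a / b"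
  shows "x * b < a"
proof -
  have "a / b > 0" using assms(1,3) by linarith
  then have "b > 0" using assms(2) by (simp add: zero_less_divide_iff)
  then show ?thesis using assms(3) by (simp add: less_divide_eq)
qed

lemma delta_opt_bounds_if_I_ge:
  assumes "sx2 > 0" "s02 > 0" "0 < eps" "eps \<le> 1" "se > 0"
    and I: "1 - (1 - eps) / eps * (1 - R_ratio sx2 se) \<le> I"
    and optimal: "se ^ 4 = 4 * s02 * (eps * sx2 * (1 - R_ratio sx2 se * I))"
  shows "delta_opt s02 se < 2 \<and>
      (sx2 < s02 / (eps * (1 - R_ratio sx2 se * I)) \<longrightarrow> delta_opt s02 se < 1)"
proof (intro conjI impI)
  note Err_less = Err_less_noise[OF assms(1,5,3,4) I]
  show "delta_opt s02 se < 2"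
    by (rule delta_opt_bounds(1)[OF assms(5,2) optimal Err_less])
  assume "sx2 < s02 / (eps * (1 - R_ratio sx2 se * I))"
  then have "sx2 * (eps * (1 - R_ratio sx2 se * I)) < s02"
    by (rule mult_less_if_less_divide[OF assms(1,2)])
  then have "eps * sx2 * (1 - R_ratio sx2 se * I) < s02"
    by (metis mult.assoc mult.left_commute)
  then show "delta_opt s02 se < 1"
    by (rule delta_opt_bounds(2)[OF assms(5,2) optimal Err_less])
qed

theorem proposition3:
  fixes sx2 s02 eps :: real
  assumes "sx2 > 0" and "s02 > 0" and "0 < eps" and "eps \<le> 1"
  shows
   "(\<forall>se. se > 0 \<and> se ^ 4 = 4 * s02 * Err_real sx2 eps se \<longrightarrow>
        delta_opt s02 se < 2 \<and>
        (sx2 < s02 / (eps * (1 - R_ratio sx2 se * I_real (R_ratio sx2 se) eps))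
           \<longrightarrow> delta_opt s02 se < 1))
    \<and>
    (\<forall>se. se > 0 \<and> se ^ 4 = 4 * s02 * Err_cplx sx2 eps se \<longrightarrow>
        delta_opt s02 se < 2 \<and>
        (sx2 < s02 / (eps * (1 - R_ratio sx2 se * I_cplx (R_ratio sx2 se) eps))
           \<longrightarrow> delta_opt s02 se < 1))"
proof -
  have "delta_opt s02 se < 2 \<and> (sx2 < s02 / (eps * (1 - R_ratio sx2 se
      * I_real (R_ratio sx2 se) eps)) \<longrightarrow> delta_opt s02 se < 1)"
    if "se > 0" "se ^ 4 = 4 * s02 * Err_real sx2 eps se" for se
    using delta_opt_bounds_if_I_ge[OF assms that(1)
        I_real_ge[OF R_ratio_bounds[OF assms(1) that(1)] assms(3,4)] that(2)[unfolded Err_real_def]] .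
  moreover have "delta_opt s02 se < 2 \<and> (sx2 < s02 / (eps * (1 - R_ratio sx2 se
      * I_cplx (R_ratio sx2 se) eps)) \<longrightarrow> delta_opt s02 se < 1)"
    if "se > 0" "se ^ 4 = 4 * s02 * Err_cplx sx2 eps se" for se
    using delta_opt_bounds_if_I_ge[OF assms that(1)
        I_cplx_ge[OF R_ratio_bounds[OF assms(1) that(1)] assms(3,4)] that(2)[unfolded Err_cplx_def]] .
  ultimately show ?thesis by blast
qed

end
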